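(* Let $(\mathcal G,\mathcal D,\{\mathcal D_1,\ldots,\mathcal D_n\})$ be a minimal decomposition of a closed triangulated surface $\mathcal T$. Then every triangle of $\mathcal G$ intersects the boundary $\partial\mathcal G$ of $\mathcal G$.
   Context: A triangulated surface is a finite simplicial complex whose underlying space is a connected compact surface; it is closed if the surface has empty boundary; $\partial$ denotes the induced triangulation of the boundary. The valence of a vertex is the number of triangles containing it. A decomposition of a closed triangulated surface $\mathcal T$ is a triple $(\mathcal G,\mathcal D,\{\mathcal D_1,\ldots,\mathcal D_n\})$, $n\geq0$, of sub-triangulations (subcomplexes which are triangulated surfaces) of $\mathcal T$ such that $\mathcal D,\mathcal D_1,\ldots,\mathcal D_n$ are triangulated discs, the interior of $\mathcal D$ contains a vertex of maximal valence in $\mathcal T$, their union is $\mathcal T$, and any two of them intersect in a triangulated circle or not at all. A decomposition is minimal if the number of triangles of $\mathcal G$ is minimal among all decompositions of $\mathcal T$. *)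

theory Defs
  imports Main
begin

text \<open>Combinatorial (abstract) simplicial complexes.  A 2-dimensional pure complex
is represented by its set of triangles (3-element vertex sets); its faces are the
nonempty subsets of triangles.\<close>

definition graph_connected :: "'a set \<Rightarrow> 'a set set \<Rightarrow> bool" where
  "graph_connected V E \<longleftrightarrow>
     (\<forall>u\<in>V. \<forall>w\<in>V. (u, w) \<in> ({(x, y). {x, y} \<in> E})\<^sup>*)"

definition verts :: "'a set set \<Rightarrow> 'a set" where
  "verts K = \<Union>K"

definition edges :: "'a set set \<Rightarrow> 'a set set" where
  "edges K = {e. card e = 2 \<and> (\<exists>t\<in>K. e \<subseteq> t)}"

definition tris_at_edge :: "'a set set \<Rightarrow> 'a set \<Rightarrow> 'a set set" where
  "tris_at_edge K e = {t\<in>K. e \<subseteq> t}"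

definition vlink :: "'a set set \<Rightarrow> 'a \<Rightarrow> 'a set set" where
  "vlink K v = {t - {v} | t. t \<in> K \<and> v \<in> t}"

text \<open>Triangulated (connected, compact) surface, combinatorially: every edge lies in
one or two triangles, every vertex link is connected (so it is a path or a cycle),
and the complex is connected.\<close>
definition triangulated_surface :: "'a set set \<Rightarrow> bool" where
  "triangulated_surface K \<longleftrightarrow>
     finite K \<and> K \<noteq> {} \<and> (\<forall>t\<in>K. card t = 3) \<and>
     (\<forall>e\<in>edges K. card (tris_at_edge K e) = 1 \<or> card (tris_at_edge K e) = 2) \<and>
     (\<forall>v\<in>verts K. graph_connected (\<Union>(vlink K v)) (vlink K v)) \<and>
     graph_connected (verts K) (edges K)"

definition closed_surface :: "'a set set \<Rightarrow> bool" where
  "closed_surface K \<longleftrightarrow> triangulated_surface K \<and>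
     (\<forall>e\<in>edges K. card (tris_at_edge K e) = 2)"

definition boundary_edges :: "'a set set \<Rightarrow> 'a set set" where
  "boundary_edges K = {e\<in>edges K. card (tris_at_edge K e) = 1}"

definition boundary_verts :: "'a set set \<Rightarrow> 'a set" where
  "boundary_verts K = \<Union>(boundary_edges K)"

definition valence :: "'a set set \<Rightarrow> 'a \<Rightarrow> nat" where
  "valence K v = card {t\<in>K. v \<in> t}"

definition euler_char :: "'a set set \<Rightarrow> int" where
  "euler_char K = int (card (verts K)) - int (card (edges K)) + int (card K)"

text \<open>Triangulated disc: a triangulated surface with nonempty boundary and Euler
characteristic 1 (by the classification of compact surfaces this is exactly a disc).\<close>
definition tri_disc :: "'a set set \<Rightarrow> bool" where
  "tri_disc K \<longleftrightarrow> triangulated_surface K \<and> boundary_edges K \<noteq> {} \<and> euler_char K = 1"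

definition faces :: "'a set set \<Rightarrow> 'a set set" where
  "faces K = {s. s \<noteq> {} \<and> (\<exists>t\<in>K. s \<subseteq> t)}"

definition tri_circle :: "'a set set \<Rightarrow> bool" where
  "tri_circle C \<longleftrightarrow> finite C \<and> C \<noteq> {} \<and>
     (\<forall>s\<in>C. card s = 1 \<or> card s = 2) \<and>
     (\<forall>s\<in>C. \<forall>x\<in>s. {x} \<in> C) \<and>
     (\<forall>x. {x} \<in> C \<longrightarrow> card {e\<in>C. card e = 2 \<and> x \<in> e} = 2) \<and>
     graph_connected (\<Union>C) {e\<in>C. card e = 2}"

definition decomposition :: "'a set set \<Rightarrow> 'a set set \<Rightarrow> 'a set set \<Rightarrow> 'a set set list \<Rightarrow> bool" where
  "decomposition T G D Ds \<longleftrightarrow>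
     closed_surface T \<and>
     G \<subseteq> T \<and> triangulated_surface G \<and>
     D \<subseteq> T \<and> tri_disc D \<and>
     (\<forall>Di\<in>set Ds. Di \<subseteq> T \<and> tri_disc Di) \<and>
     (\<exists>v\<in>verts D - boundary_verts D. \<forall>w\<in>verts T. valence T w \<le> valence T v) \<and>
     G \<union> D \<union> \<Union>(set Ds) = T \<and>
     (let L = G # D # Ds in
       \<forall>i j. i < j \<and> j < length L \<longrightarrow>
         faces (L ! i) \<inter> faces (L ! j) = {} \<or> tri_circle (faces (L ! i) \<inter> faces (L ! j)))"

definition minimal_decomposition :: "'a set set \<Rightarrow> 'a set set \<Rightarrow> 'a set set \<Rightarrow> 'a set set list \<Rightarrow> bool" where
  "minimal_decomposition T G D Ds \<longleftrightarrow> decomposition T G D Ds \<and>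
     (\<forall>G' D' Ds'. decomposition T G' D' Ds' \<longrightarrow> card G \<le> card G')"

end

theory Submission
  imports Defs
begin

text \<open>Suppose a triangle t of G has no vertex on the boundary of G. Walking around the link
in T of a vertex of t crosses only interior edges of G, whose two triangles both lie in G,
so every triangle of T meeting t lies in G and t is disjoint from all the discs. Removing t
from G still leaves a triangulated surface: the link of each vertex of t is a cycle that
merely loses one edge. Since t itself is a disc meeting G - {t} in its boundary circle,
splitting it off yields a decomposition whose first piece has fewer triangles, contradicting
minimality.\<close>

section \<open>Graphs whose edges are two-element sets\<close>

lemma graph_connected_if_complete:
  assumes "\<And>u w. u \<in> V \<Longrightarrow> w \<in> V \<Longrightarrow> u \<noteq> w \<Longrightarrow> {u, w} \<in> E"
  shows "graph_connected V E"
  unfolding graph_connected_def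
proof (intro ballI)
  fix u w assume "u \<in> V" "w \<in> V"
  then show "(u, w) \<in> {(x, y). {x, y} \<in> E}\<^sup>*"
    using assms by (cases "u = w") auto
qed

lemma handshake:
  assumes "finite V" "finite E" "\<forall>f\<in>E. f \<subseteq> V \<and> card f = 2"
  shows "(\<Sum>x\<in>V. card {f\<in>E. x \<in> f}) = 2 * card E"
proof -
  have "{x\<in>V. x \<in> f} = f" if "f \<in> E" for f
    using assms(3) that by auto
  then have "\<forall>f\<in>E. card {x\<in>V. x \<in> f} = 2"
    using assms(3) by simp
  then show ?thesis using sum_multicount[OF assms(1,2)] by blast
qed

lemma not_single_vertex_of_degree_one:
  assumes "finite V" "finite E" "\<forall>f\<in>E. f \<subseteq> V \<and> card f = 2" "a \<in> V"
    and deg: "\<forall>x\<in>V. card {f\<in>E. x \<in> f} = (if x = a then 1 else 2)"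
  shows False
proof -
  have "2 * card E = (\<Sum>x\<in>V. card {f\<in>E. x \<in> f})"
    using handshake[OF assms(1-3)] by simp
  also have "\<dots> = (\<Sum>x\<in>V. if x = a then 1 else 2)"
    using deg by simp
  also have "\<dots> = 1 + 2 * (card V - 1)"
    using assms(1,4) by (simp add: sum.remove sum.If_cases)
  finally show False by presburger
qed

lemma rtrancl_Diff_edge_of_2_regular:
  fixes E :: "'a set set"
  assumes fin: "finite E" and E2: "\<forall>f\<in>E. card f = 2"
    and deg2: "\<forall>x\<in>\<Union>E. card {f\<in>E. x \<in> f} = 2"
    and ab: "{a, b} \<in> E" "a \<noteq> b"
  shows "(a, b) \<in> {(x, y). {x, y} \<in> E - {{a, b}}}\<^sup>*"
    (is "_ \<in> ?R\<^sup>*")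
proof (rule ccontr)
  assume b: "(a, b) \<notin> ?R\<^sup>*"
  \<comment> \<open>then a would be the only vertex of odd degree in the component C of a\<close>
  define C where "C = {x. (a, x) \<in> ?R\<^sup>*}"
  define F where "F = {f \<in> E - {{a, b}}. f \<subseteq> C}"
  have CU: "C \<subseteq> \<Union>E"
  proof
    fix x assume "x \<in> C"
    then have "(a, x) \<in> ?R\<^sup>*" by (simp add: C_def)
    then show "x \<in> \<Union>E" by induction (use ab in auto)
  qed
  have finC: "finite C"
    using CU fin E2 by (metis card.infinite finite_Union finite_subset zero_neq_numeral)
  have edges_at_C: "{f\<in>F. x \<in> f} = {f\<in>E - {{a, b}}. x \<in> f}" if "x \<in> C" for x
  proof (intro equalityI subsetI)
    fix f assume f: "f \<in> {f\<in>E - {{a, b}}. x \<in> f}"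
    then have "card (f - {x}) = 1" using E2 by (simp add: card_Diff_singleton_if)
    then obtain y where "f - {x} = {y}" by (rule card_1_singletonE)
    then have "f = {x, y}" using f by blast
    then have "(x, y) \<in> ?R" using f by auto
    with that have "y \<in> C" unfolding C_def by (blast intro: rtrancl_into_rtrancl)
    then show "f \<in> {f\<in>F. x \<in> f}" using f \<open>f = {x, y}\<close> that by (auto simp: F_def)
  qed (auto simp: F_def)
  have deg_C: "card {f\<in>F. x \<in> f} = (if x = a then 1 else 2)" if "x \<in> C" for x
  proof -
    have deg: "card {f\<in>E. x \<in> f} = 2" using deg2 CU that by blast
    have "x \<noteq> b" using that b by (auto simp: C_def)
    then have "{f\<in>E - {{a, b}}. x \<in> f} = {f\<in>E. x \<in> f} - (if x = a then {{a, b}} else {})"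
      by auto
    then show ?thesis
      using deg fin ab edges_at_C[OF that] by (cases "x = a") (simp_all add: card_Diff_singleton)
  qed
  have "finite F" using fin by (simp add: F_def)
  moreover have "\<forall>f\<in>F. f \<subseteq> C \<and> card f = 2" using E2 by (simp add: F_def)
  moreover have "a \<in> C" by (simp add: C_def)
  ultimately show False
    by (rule not_single_vertex_of_degree_one[OF finC]) (simp add: deg_C)
qed

lemma graph_connected_Diff_edge:
  fixes E :: "'a set set"
  assumes fin: "finite E" and E2: "\<forall>f\<in>E. card f = 2"
    and deg2: "\<forall>x\<in>\<Union>E. card {f\<in>E. x \<in> f} = 2"
    and conn: "graph_connected (\<Union>E) E" and eE: "e \<in> E"
  shows "graph_connected (\<Union>(E - {e})) (E - {e})"
proof -
  obtain a b where ab: "e = {a, b}" "a \<noteq> b" using E2 eE by (meson card_2_iff)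
  define R where "R = {(x, y). {x, y} \<in> E - {e}}"
  have same_verts: "\<Union>(E - {e}) = \<Union>E"
  proof (intro equalityI subsetI)
    fix x assume x: "x \<in> \<Union>E"
    then have "card {f\<in>E. x \<in> f} = 2" using deg2 by blast
    then obtain f1 f2 where "f1 \<noteq> f2" "{f\<in>E. x \<in> f} = {f1, f2}" by (meson card_2_iff)
    then show "x \<in> \<Union>(E - {e})" by blast
  qed auto
  have "(a, b) \<in> R\<^sup>*"
    using rtrancl_Diff_edge_of_2_regular[OF fin E2 deg2] eE ab by (simp add: R_def)
  moreover have "sym (R\<^sup>*)" by (rule sym_rtrancl) (auto simp: R_def sym_def insert_commute)
  ultimately have "(b, a) \<in> R\<^sup>*" by (meson symD)
  have "{(x, y). {x, y} \<in> E} \<subseteq> R\<^sup>*"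
  proof clarify
    fix x y assume "{x, y} \<in> E"
    then show "(x, y) \<in> R\<^sup>*"
      using \<open>(a, b) \<in> R\<^sup>*\<close> \<open>(b, a) \<in> R\<^sup>*\<close> ab
      by (cases "{x, y} = e") (auto simp: R_def doubleton_eq_iff)
  qed
  then have "{(x, y). {x, y} \<in> E}\<^sup>* \<subseteq> R\<^sup>*" by (metis rtrancl_subset_rtrancl)
  then show ?thesis
    using conn same_verts by (auto simp: graph_connected_def R_def)
qed

lemma triangle_other_vertex:
  assumes "card s = 3"
  obtains y where "y \<in> s" "y \<noteq> v"
  using assms by (metis card_3_iff insertCI)

lemma tri_circle_proper_faces:
  assumes t3: "card t = 3"
  shows "tri_circle {s. s \<noteq> {} \<and> s \<subset> t}" (is "tri_circle ?C")
  unfolding tri_circle_def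
proof (intro conjI allI impI ballI)
  have fin: "finite t" using t3 card.infinite by fastforce
  then show "finite ?C" by (rule finite_subset[rotated, OF finite_Pow_iff[THEN iffD2]]) auto
  obtain a b c where abc: "t = {a, b, c}" "a \<noteq> b" "a \<noteq> c" "b \<noteq> c"
    using t3 by (meson card_3_iff)
  then show "?C \<noteq> {}" by auto
  show "card s = 1 \<or> card s = 2" if "s \<in> ?C" for s
    using that fin t3 psubset_card_mono[of t s] card_0_eq[of s] finite_subset[of s t] by fastforce
  show "{x} \<in> ?C" if "s \<in> ?C" "x \<in> s" for s x
    using that abc by auto
  show "card {e \<in> ?C. card e = 2 \<and> x \<in> e} = 2" if "{x} \<in> ?C" for x
  proof -
    have xt: "x \<in> t" using that by auto
    have "{e \<in> ?C. card e = 2 \<and> x \<in> e} = (\<lambda>y. {x, y}) ` (t - {x})"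
    proof (intro equalityI subsetI)
      fix e assume "e \<in> {e \<in> ?C. card e = 2 \<and> x \<in> e}"
      then obtain y where "e = {x, y}" "y \<noteq> x" "e \<subseteq> t"
        by (auto simp: card_2_iff)
      then show "e \<in> (\<lambda>y. {x, y}) ` (t - {x})" by auto
    next
      fix e assume "e \<in> (\<lambda>y. {x, y}) ` (t - {x})"
      then obtain y where "e = {x, y}" "y \<in> t" "y \<noteq> x" by auto
      moreover have "{x, y} \<noteq> t" using \<open>y \<noteq> x\<close> t3 by auto
      ultimately show "e \<in> {e \<in> ?C. card e = 2 \<and> x \<in> e}" using xt by auto
    qed
    moreover have "inj_on (\<lambda>y. {x, y}) (t - {x})"
      by (auto simp: inj_on_def doubleton_eq_iff)
    ultimately show ?thesis using xt t3 fin by (simp add: card_image)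
  qed
  show "graph_connected (\<Union>?C) {e \<in> ?C. card e = 2}"
  proof (rule graph_connected_if_complete)
    fix u w assume "u \<in> \<Union>?C" "w \<in> \<Union>?C" "u \<noteq> w"
    then have "{u, w} \<subseteq> t" "card {u, w} = 2" by auto
    moreover have "{u, w} \<noteq> t" using \<open>card {u, w} = 2\<close> t3 by auto
    ultimately show "{u, w} \<in> {e \<in> ?C. card e = 2}" by auto
  qed
qed

lemma tri_disc_singleton:
  assumes t3: "card t = 3"
  shows "tri_disc {t}"
proof -
  have fin: "finite t" using t3 card.infinite by fastforce
  have edges: "edges {t} = {e. e \<subseteq> t \<and> card e = 2}"
    by (auto simp: edges_def)
  have tris: "tris_at_edge {t} e = {t}" if "e \<in> edges {t}" for e
    using that by (auto simp: tris_at_edge_def edges_def)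
  have link: "vlink {t} v = {t - {v}}" if "v \<in> t" for v
    using that by (auto simp: vlink_def)
  have "triangulated_surface {t}"
    unfolding triangulated_surface_def
  proof (intro conjI ballI)
    fix v assume "v \<in> verts {t}"
    then have "v \<in> t" by (simp add: verts_def)
    then show "graph_connected (\<Union>(vlink {t} v)) (vlink {t} v)"
      using t3 by (auto simp: link card_3_iff intro!: graph_connected_if_complete)
  next
    show "graph_connected (verts {t}) (edges {t})"
      by (rule graph_connected_if_complete) (auto simp: verts_def edges)
  qed (use t3 tris in auto)
  moreover obtain a b where "{a, b} \<subseteq> t" "a \<noteq> b"
    using t3 by (metis card_3_iff empty_subsetI insert_subset insertI1 insertI2)
  then have "{a, b} \<in> boundary_edges {t}"
    using tris[of "{a, b}"] by (simp add: boundary_edges_def edges)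
  then have "boundary_edges {t} \<noteq> {}" by blast
  moreover have "card (edges {t}) = 3"
    using fin t3 by (simp add: edges n_subsets choose_two)
  then have "euler_char {t} = 1"
    using t3 by (simp add: euler_char_def verts_def)
  ultimately show ?thesis by (simp add: tri_disc_def)
qed

section \<open>Removing a triangle with no boundary vertex\<close>

lemma verts_eq_Union_edges:
  assumes "\<forall>s\<in>K. card s = 3"
  shows "verts K = \<Union>(edges K)"
proof (intro equalityI subsetI)
  fix x assume "x \<in> verts K"
  then obtain s where s: "s \<in> K" "x \<in> s" by (auto simp: verts_def)
  then obtain y where "y \<in> s" "y \<noteq> x" using assms triangle_other_vertex by metis
  then have "{x, y} \<in> edges K" using s by (auto simp: edges_def)
  then show "x \<in> \<Union>(edges K)" by blast
qed (auto simp: verts_def edges_def)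

lemma card_tris_at_edge_interior:
  assumes G: "triangulated_surface G" and e: "e \<in> edges G"
    and v: "v \<in> e" "v \<notin> boundary_verts G"
  shows "card (tris_at_edge G e) = 2"
proof -
  have "card (tris_at_edge G e) = 1 \<or> card (tris_at_edge G e) = 2"
    using G e by (simp add: triangulated_surface_def)
  moreover have "e \<notin> boundary_edges G" using v by (auto simp: boundary_verts_def)
  ultimately show ?thesis using e by (auto simp: boundary_edges_def)
qed

lemma other_triangle_at_interior_edge:
  assumes G: "triangulated_surface G" and t: "t \<in> G" "e \<subseteq> t" "card e = 2"
    and v: "v \<in> e" "v \<notin> boundary_verts G"
  obtains t' where "t' \<in> G" "t' \<noteq> t" "e \<subseteq> t'"
proof -
  have "e \<in> edges G" using t unfolding edges_def by blast
  then have "card (tris_at_edge G e) = 2" by (rule card_tris_at_edge_interior[OF G _ v])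
  then obtain t1 t2 where t12: "tris_at_edge G e = {t1, t2}" "t1 \<noteq> t2" by (meson card_2_iff)
  then have "t1 \<in> G" "e \<subseteq> t1" "t2 \<in> G" "e \<subseteq> t2"
    by (auto simp: tris_at_edge_def set_eq_iff)
  then show thesis using that t12(2) by (cases "t1 = t") auto
qed

lemma vlink_degree_interior:
  assumes G: "triangulated_surface G" and v: "v \<notin> boundary_verts G"
    and x: "x \<in> \<Union>(vlink G v)"
  shows "card {f \<in> vlink G v. x \<in> f} = 2"
proof -
  obtain s where s: "s \<in> G" "v \<in> s" "x \<in> s" "x \<noteq> v" using x by (auto simp: vlink_def)
  have "{v, x} \<in> edges G" using s by (auto simp: edges_def)
  then have "card (tris_at_edge G {v, x}) = 2"
    using card_tris_at_edge_interior[OF G _ _ v] by simp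
  moreover have "{f \<in> vlink G v. x \<in> f} = (\<lambda>s. s - {v}) ` tris_at_edge G {v, x}"
  proof (intro equalityI subsetI)
    fix f assume "f \<in> {f \<in> vlink G v. x \<in> f}"
    then obtain s' where "f = s' - {v}" "s' \<in> G" "v \<in> s'" "x \<in> s'"
      by (auto simp: vlink_def)
    then show "f \<in> (\<lambda>s. s - {v}) ` tris_at_edge G {v, x}"
      by (auto simp: tris_at_edge_def)
  next
    fix f assume "f \<in> (\<lambda>s. s - {v}) ` tris_at_edge G {v, x}"
    then obtain s' where "f = s' - {v}" "s' \<in> G" "{v, x} \<subseteq> s'"
      by (auto simp: tris_at_edge_def)
    then show "f \<in> {f \<in> vlink G v. x \<in> f}"
      using s(4) by (auto simp: vlink_def)
  qed
  moreover have "inj_on (\<lambda>s. s - {v}) (tris_at_edge G {v, x})"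
  proof (rule inj_onI)
    fix s1 s2 assume "s1 \<in> tris_at_edge G {v, x}" "s2 \<in> tris_at_edge G {v, x}"
      and "s1 - {v} = s2 - {v}"
    then show "s1 = s2" unfolding tris_at_edge_def by (metis insert_Diff insert_subset mem_Collect_eq)
  qed
  ultimately show ?thesis by (metis card_image)
qed

lemma vlink_Diff_triangle:
  assumes "v \<in> t"
  shows "vlink (K - {t}) v = vlink K v - {t - {v}}"
proof -
  have "s - {v} = t - {v} \<longleftrightarrow> s = t" if "v \<in> s" for s
    using assms that by (metis insert_Diff)
  then show ?thesis by (auto simp: vlink_def)
qed

lemma edges_Diff_interior_triangle:
  assumes G: "triangulated_surface G" and t: "t \<in> G" and int: "t \<inter> boundary_verts G = {}"
  shows "edges (G - {t}) = edges G"
proof (intro equalityI subsetI)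
  fix e assume "e \<in> edges G"
  then obtain s where s: "s \<in> G" "e \<subseteq> s" and e2: "card e = 2" by (auto simp: edges_def)
  show "e \<in> edges (G - {t})"
  proof (cases "s = t")
    case True
    obtain v where v: "v \<in> e" using e2 by fastforce
    have "e \<subseteq> t" using True s by simp
    moreover have "v \<notin> boundary_verts G" using int v \<open>e \<subseteq> t\<close> by blast
    ultimately obtain t' where "t' \<in> G" "t' \<noteq> t" "e \<subseteq> t'"
      using other_triangle_at_interior_edge[OF G t _ e2 v] by blast
    then show ?thesis using e2 by (auto simp: edges_def)
  next
    case False
    then show ?thesis using s e2 by (auto simp: edges_def)
  qed
qed (auto simp: edges_def)

lemma card_tris_at_edge_Diff_interior_triangle:
  assumes G: "triangulated_surface G" and t: "t \<in> G" and int: "t \<inter> boundary_verts G = {}"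
    and e: "e \<in> edges G"
  shows "card (tris_at_edge (G - {t}) e) = 1 \<or> card (tris_at_edge (G - {t}) e) = 2"
proof -
  have fin: "finite (tris_at_edge G e)"
    using G by (simp add: triangulated_surface_def tris_at_edge_def)
  have tris: "tris_at_edge (G - {t}) e = tris_at_edge G e - {t}"
    by (auto simp: tris_at_edge_def)
  show ?thesis
  proof (cases "t \<in> tris_at_edge G e")
    case True
    obtain v where "v \<in> e" using e by (fastforce simp: edges_def)
    moreover have "e \<subseteq> t" using True by (simp add: tris_at_edge_def)
    ultimately have "card (tris_at_edge G e) = 2"
      using card_tris_at_edge_interior[OF G e] int by blast
    then show ?thesis using True fin by (simp add: tris)
  next
    case False
    then show ?thesis using G e by (simp add: tris triangulated_surface_def)
  qed
qed

lemma graph_connected_vlink_Diff_interior_triangle: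
  assumes G: "triangulated_surface G" and t: "t \<in> G" and int: "t \<inter> boundary_verts G = {}"
    and v: "v \<in> verts G"
  shows "graph_connected (\<Union>(vlink (G - {t}) v)) (vlink (G - {t}) v)"
proof -
  have conn: "graph_connected (\<Union>(vlink G v)) (vlink G v)"
    using G v by (simp add: triangulated_surface_def)
  show ?thesis
  proof (cases "v \<in> t")
    case True
    have "vlink G v = (\<lambda>s. s - {v}) ` {s \<in> G. v \<in> s}" by (auto simp: vlink_def)
    then have "finite (vlink G v)" using G by (simp add: triangulated_surface_def)
    moreover have "\<forall>f\<in>vlink G v. card f = 2"
      using G by (auto simp: vlink_def triangulated_surface_def)
    moreover have "\<forall>x\<in>\<Union>(vlink G v). card {f \<in> vlink G v. x \<in> f} = 2"
      using vlink_degree_interior[OF G] int True by blast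
    moreover have "t - {v} \<in> vlink G v" using t True by (auto simp: vlink_def)
    ultimately show ?thesis
      using graph_connected_Diff_edge conn by (simp add: vlink_Diff_triangle[OF True])
  next
    case False
    then have "vlink (G - {t}) v = vlink G v" by (auto simp: vlink_def)
    then show ?thesis using conn by simp
  qed
qed

lemma triangulated_surface_Diff_interior_triangle:
  assumes G: "triangulated_surface G" and t: "t \<in> G" and int: "t \<inter> boundary_verts G = {}"
  shows "triangulated_surface (G - {t})"
proof -
  have card3: "\<forall>s\<in>G. card s = 3" using G by (simp add: triangulated_surface_def)
  have edges_eq: "edges (G - {t}) = edges G"
    by (rule edges_Diff_interior_triangle[OF G t int])
  then have verts_eq: "verts (G - {t}) = verts G"
    using card3 verts_eq_Union_edges[of G] verts_eq_Union_edges[of "G - {t}"] by simp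
  have "t \<noteq> {}" using card3 t by fastforce
  then have "edges G \<noteq> {}" using t verts_eq_Union_edges[OF card3] by (auto simp: verts_def)
  then have "edges (G - {t}) \<noteq> {}" using edges_eq by simp
  then have "G - {t} \<noteq> {}" by (auto simp: edges_def)
  then show ?thesis
    using G card3 edges_eq verts_eq
      card_tris_at_edge_Diff_interior_triangle[OF G t int]
      graph_connected_vlink_Diff_interior_triangle[OF G t int]
    by (auto simp: triangulated_surface_def)
qed

lemma faces_Diff_interior_triangle_Int:
  assumes G: "triangulated_surface G" and t: "t \<in> G" and int: "t \<inter> boundary_verts G = {}"
  shows "faces (G - {t}) \<inter> faces {t} = {s. s \<noteq> {} \<and> s \<subset> t}"
proof (intro equalityI subsetI)
  fix s assume "s \<in> faces (G - {t}) \<inter> faces {t}"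
  then obtain t' where t': "t' \<in> G" "t' \<noteq> t" "s \<subseteq> t'" and s: "s \<noteq> {}" "s \<subseteq> t"
    by (auto simp: faces_def)
  have "card t' = 3" "card t = 3" using G t t' by (auto simp: triangulated_surface_def)
  then have "\<not> t \<subseteq> t'" using t'(2) by (metis card_subset_eq card.infinite zero_neq_numeral)
  then show "s \<in> {s. s \<noteq> {} \<and> s \<subset> t}" using s t' by auto
next
  fix s assume "s \<in> {s. s \<noteq> {} \<and> s \<subset> t}"
  then obtain x where s: "s \<noteq> {}" "s \<subseteq> t - {x}" and x: "x \<in> t" by blast
  have "card t = 3" using G t by (simp add: triangulated_surface_def)
  then have e2: "card (t - {x}) = 2" using x by simp
  then obtain v where v: "v \<in> t - {x}" by (metis card.empty ex_in_conv zero_neq_numeral)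
  then have "v \<notin> boundary_verts G" using int by blast
  then obtain t' where "t' \<in> G" "t' \<noteq> t" "t - {x} \<subseteq> t'"
    using other_triangle_at_interior_edge[OF G t _ e2 v] by blast
  then show "s \<in> faces (G - {t}) \<inter> faces {t}" using s by (auto simp: faces_def)
qed

lemma tris_at_edge_eq_if_interior:
  assumes T: "triangulated_surface T" and GT: "G \<subseteq> T" and e: "e \<in> edges G"
    and G2: "card (tris_at_edge G e) = 2"
  shows "tris_at_edge T e = tris_at_edge G e"
proof -
  have "e \<in> edges T" using e GT by (auto simp: edges_def)
  then have "card (tris_at_edge T e) \<le> 2" using T by (auto simp: triangulated_surface_def)
  moreover have "finite (tris_at_edge T e)" using T by (simp add: triangulated_surface_def tris_at_edge_def)
  moreover have "tris_at_edge G e \<subseteq> tris_at_edge T e" using GT by (auto simp: tris_at_edge_def)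
  ultimately show ?thesis using G2 by (metis card_seteq)
qed

lemma triangle_at_interior_vertex_mem:
  assumes T: "triangulated_surface T" and GT: "G \<subseteq> T" and G: "triangulated_surface G"
    and v: "v \<in> verts G" "v \<notin> boundary_verts G" and s: "s \<in> T" "v \<in> s"
  shows "s \<in> G"
proof -
  have star_eq: "tris_at_edge T {v, x} = tris_at_edge G {v, x}" if "{v, x} \<in> edges G" for x
    using tris_at_edge_eq_if_interior[OF T GT that] card_tris_at_edge_interior[OF G that _ v(2)]
    by simp
  have "graph_connected (\<Union>(vlink T v)) (vlink T v)"
    using T s by (auto simp: triangulated_surface_def verts_def)
  \<comment> \<open>walk in the link of v from a triangle of G to s; each step crosses an interior edge of G\<close>
  moreover obtain t0 where "t0 \<in> G" "v \<in> t0" using v(1) by (auto simp: verts_def)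
  moreover obtain u where "u \<in> t0" "u \<noteq> v"
    using triangle_other_vertex G \<open>t0 \<in> G\<close> by (metis triangulated_surface_def)
  moreover obtain y where "y \<in> s" "y \<noteq> v"
    using triangle_other_vertex T s(1) by (metis triangulated_surface_def)
  ultimately have "(u, y) \<in> {(x, z). {x, z} \<in> vlink T v}\<^sup>*"
    using GT s by (auto simp: graph_connected_def vlink_def)
  then have "{v, y} \<in> edges G"
  proof induction
    case base
    show ?case using \<open>t0 \<in> G\<close> \<open>v \<in> t0\<close> \<open>u \<in> t0\<close> \<open>u \<noteq> v\<close> by (auto simp: edges_def)
  next
    case (step x z)
    then obtain s' where s': "s' \<in> T" "v \<in> s'" "{x, z} = s' - {v}" by (auto simp: vlink_def)
    then have "s' \<in> tris_at_edge T {v, x}" by (auto simp: tris_at_edge_def)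
    then have "s' \<in> tris_at_edge G {v, x}" using star_eq[OF step.IH] by simp
    then have "s' \<in> G" by (simp add: tris_at_edge_def)
    moreover have "z \<in> s'" "z \<noteq> v" using s'(3) by blast+
    ultimately show ?case using s'(2) by (auto simp: edges_def)
  qed
  moreover have "s \<in> tris_at_edge T {v, y}" using s \<open>y \<in> s\<close> by (auto simp: tris_at_edge_def)
  ultimately have "s \<in> tris_at_edge G {v, y}" using star_eq by simp
  then show ?thesis by (simp add: tris_at_edge_def)
qed

section \<open>Decompositions\<close>

definition circle_meet :: "'a set set \<Rightarrow> 'a set set \<Rightarrow> bool" where
  "circle_meet A B \<longleftrightarrow> faces A \<inter> faces B = {} \<or> tri_circle (faces A \<inter> faces B)"

lemma decomposition_iff_sorted_wrt:
  "decomposition T G D Ds \<longleftrightarrow>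
     closed_surface T \<and> G \<subseteq> T \<and> triangulated_surface G \<and> D \<subseteq> T \<and> tri_disc D \<and>
     (\<forall>Di\<in>set Ds. Di \<subseteq> T \<and> tri_disc Di) \<and>
     (\<exists>v\<in>verts D - boundary_verts D. \<forall>w\<in>verts T. valence T w \<le> valence T v) \<and>
     G \<union> D \<union> \<Union>(set Ds) = T \<and> sorted_wrt circle_meet (G # D # Ds)"
  unfolding decomposition_def sorted_wrt_iff_nth_less circle_meet_def Let_def by blast

lemma circle_meet_no_common_triangle:
  assumes "circle_meet A B" "card s = 3" "s \<in> A"
  shows "s \<notin> B"
proof
  assume "s \<in> B"
  then have "s \<in> faces A \<inter> faces B" using assms(2,3) by (auto simp: faces_def)
  moreover have "card s \<noteq> 1" "card s \<noteq> 2" using assms(2) by simp_all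
  ultimately have "\<not> tri_circle (faces A \<inter> faces B)" unfolding tri_circle_def by blast
  then show False using assms(1) \<open>s \<in> faces A \<inter> faces B\<close> by (auto simp: circle_meet_def)
qed

lemma faces_Diff_disjoint_Int:
  assumes "\<forall>s\<in>X. s \<inter> t = {}"
  shows "faces (G - {t}) \<inter> faces X = faces G \<inter> faces X"
  using assms by (auto simp: faces_def) blast

lemma faces_disjoint_singleton:
  assumes "\<forall>s\<in>X. s \<inter> t = {}"
  shows "faces X \<inter> faces {t} = {}"
  using assms by (auto simp: faces_def)

lemma decomposition_move_interior_triangle:
  assumes dec: "decomposition T G D Ds" and t: "t \<in> G" and int: "t \<inter> boundary_verts G = {}"
  shows "decomposition T (G - {t}) D (Ds @ [{t}])"
proof -
  let ?M = "D # Ds"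
  have T: "closed_surface T" and G: "triangulated_surface G" and GT: "G \<subseteq> T"
    and M: "\<forall>X\<in>set ?M. X \<subseteq> T" and meet_G: "\<forall>X\<in>set ?M. circle_meet G X"
    and meet_M: "sorted_wrt circle_meet ?M"
    using dec by (auto simp: decomposition_iff_sorted_wrt)
  have TS: "triangulated_surface T" using T by (simp add: closed_surface_def)
  have card3: "card s = 3" if "s \<in> T" for s
    using TS that by (simp add: triangulated_surface_def)
  have away: "\<forall>s\<in>X. s \<inter> t = {}" if X: "X \<in> set ?M" for X
  proof (intro ballI equals0I)
    fix s v assume s: "s \<in> X" and v: "v \<in> s \<inter> t"
    have sT: "s \<in> T" using M X s by blast
    have "v \<in> verts G" "v \<notin> boundary_verts G" using t v int by (auto simp: verts_def)
    then have "s \<in> G"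
      using triangle_at_interior_vertex_mem[OF TS GT G _ _ sT] v by blast
    moreover have "circle_meet G X" using meet_G X by blast
    ultimately show False
      using circle_meet_no_common_triangle[OF _ card3[OF sT]] s by blast
  qed
  have t3: "card t = 3" using card3 t GT by blast
  have "circle_meet (G - {t}) {t}"
    unfolding circle_meet_def faces_Diff_interior_triangle_Int[OF G t int]
    using tri_circle_proper_faces[OF t3] by blast
  moreover have "\<forall>X\<in>set ?M. circle_meet (G - {t}) X"
    using meet_G away by (simp add: circle_meet_def faces_Diff_disjoint_Int)
  moreover have "\<forall>X\<in>set ?M. circle_meet X {t}"
    using away by (simp add: circle_meet_def faces_disjoint_singleton)
  ultimately have "sorted_wrt circle_meet ((G - {t}) # ?M @ [{t}])"
    using meet_M by (simp add: sorted_wrt_append)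
  moreover have "tri_disc {t}" by (rule tri_disc_singleton[OF t3])
  moreover have "triangulated_surface (G - {t})"
    by (rule triangulated_surface_Diff_interior_triangle[OF G t int])
  ultimately show ?thesis
    using dec t GT by (auto simp: decomposition_iff_sorted_wrt)
qed

theorem mainTheorem5:
  fixes T G D :: "'a set set" and Ds :: "'a set set list"
  assumes "closed_surface T"
    and "minimal_decomposition T G D Ds"
  shows "\<forall>t\<in>G. t \<inter> boundary_verts G \<noteq> {}"
  \<comment> \<open>the first assumption is already part of being a decomposition\<close>
proof (rule ccontr)
  assume "\<not> ?thesis"
  then obtain t where t: "t \<in> G" and int: "t \<inter> boundary_verts G = {}" by blast
  have dec: "decomposition T G D Ds" using assms(2) by (simp add: minimal_decomposition_def)
  then have "decomposition T (G - {t}) D (Ds @ [{t}])"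
    by (rule decomposition_move_interior_triangle[OF _ t int])
  then have "card G \<le> card (G - {t})"
    using assms(2) unfolding minimal_decomposition_def by blast
  moreover have "finite G"
    using dec by (simp add: decomposition_def triangulated_surface_def)
  then have "card (G - {t}) < card G" using t by (rule card_Diff1_less)
  ultimately show False by simp
qed

end
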